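(* Let $A\in\mathbb{R}^{n\times d}$ have rows $a_1^\top,\dots,a_n^\top$, let $f_1,\dots,f_n:\mathbb{R}\to\mathbb{R}$ be convex and $(1/\gamma)$-smooth ($\gamma>0$), let $g:\mathbb{R}^d\to\mathbb{R}\cup\{+\infty\}$ be closed and $\mu$-strongly convex ($\mu>0$), and write $f^*(y)=\frac1n\sum_{i=1}^nf_i^*(y_i)$ for $y\in\mathbb{R}^n$. For the iterates of the SDAPD method (described in the context), for every $t\ge0$ and every $y\in\mathbb{R}^n$, $$\frac{1}{2\tau}\mathbb{E}_{\mathcal{F}_t}\Big[\Big(1+\frac{(n-1)\gamma\tau}{n}\Big)\|y^t-y\|_2^2-(1+\gamma\tau)\|y^{t+1}-y\|_2^2-\|y^{t+1}-y^t\|_2^2\Big]\ge\mathbb{E}_{\mathcal{F}_t}\Big[-\frac1n\langle\bar{y}^{t+1}-y,A\bar{x}^{t+1}\rangle+nf^*(y^{t+1})-(n-1)f^*(y^t)-f^*(y)\Big].$$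
   Context: $f_i^*$ is the convex conjugate of $f_i$; $\operatorname{prox}_h(u)=\arg\min_v\{h(v)+\frac12\|v-u\|_2^2\}$. SDAPD method: given $x^0\in\mathbb{R}^d$, $y^0\in\mathbb{R}^n$, $\eta,\tau>0$, $\beta_t>0$, set $B_t=\sum_{k=0}^t\beta_k$. For $t=0,1,\dots$: sample $i_t$ uniformly from $\{1,\dots,n\}$ independently of the past; $\bar{x}^{t+1}=\operatorname{prox}_{\eta g}(x^t-\frac{\eta}{n}A^\top y^t)$; $y^{t+1}_i=\operatorname{prox}_{\tau f_i^*}(y_i^t+\tau\langle a_i,\bar{x}^{t+1}\rangle)$ if $i=i_t$, $y^{t+1}_i=y^t_i$ otherwise; $\bar{y}^{t+1}=y^t+n(y^{t+1}-y^t)$; $x^{t+1}=\operatorname{prox}_{B_tg}(x^0-\sum_{k=0}^t\frac{\beta_k}{n}A^\top\bar{y}^{k+1})$. $\mathcal{F}_t$ is the $\sigma$-field generated by all random variables up to iteration $t$ (so $x^t,y^t,\bar x^{t+1}$ are determined given $\mathcal{F}_t$ and $i_t$ is independent of $\mathcal{F}_t$), and $\mathbb{E}_{\mathcal{F}_t}$ is conditional expectation given $\mathcal{F}_t$. *)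

theory Defs
  imports "HOL-Analysis.Analysis"
begin

definition conj_fun :: "(real \<Rightarrow> real) \<Rightarrow> real \<Rightarrow> ereal" where
  "conj_fun f s = (SUP x. ereal (s * x - f x))"

definition prox :: "('a::real_normed_vector \<Rightarrow> ereal) \<Rightarrow> 'a \<Rightarrow> 'a" where
  "prox h u = (SOME v. \<forall>w. h v + ereal ((1/2) * (norm (v - u))\<^sup>2)
                          \<le> h w + ereal ((1/2) * (norm (w - u))\<^sup>2))"

definition smooth_with :: "real \<Rightarrow> (real \<Rightarrow> real) \<Rightarrow> bool" where
  "smooth_with L f \<longleftrightarrow> (\<forall>x. f differentiable (at x)) \<and>
     (\<forall>x y. \<bar>deriv f x - deriv f y\<bar> \<le> L * \<bar>x - y\<bar>)"

definition closed_fun :: "('a::topological_space \<Rightarrow> ereal) \<Rightarrow> bool" where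
  "closed_fun g \<longleftrightarrow> closed {(x, r::real). g x \<le> ereal r}"

definition strongly_convex :: "real \<Rightarrow> ('a::real_normed_vector \<Rightarrow> ereal) \<Rightarrow> bool" where
  "strongly_convex mu g \<longleftrightarrow> (\<forall>x z l. 0 < l \<and> l < 1 \<longrightarrow>
     g (l *\<^sub>R x + (1 - l) *\<^sub>R z) \<le>
       ereal l * g x + ereal (1 - l) * g z - ereal (mu / 2 * l * (1 - l) * (norm (x - z))\<^sup>2))"

definition fstar :: "('n::finite \<Rightarrow> real \<Rightarrow> real) \<Rightarrow> real^'n \<Rightarrow> ereal" where
  "fstar f y = ereal (1 / real CARD('n)) * (\<Sum>i\<in>UNIV. conj_fun (f i) (y $ i))"

text \<open>SDAPD. The sampled indices are given as a sequence om :: nat => 'n (om t = i_t).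
  The state after t iterations is (x^t, y^t, S_t) with S_t = sum_{k<t} beta_k ybar^{k+1}.\<close>

definition sdapd_xbar ::
  "real^'d^'n::finite \<Rightarrow> (real^'d \<Rightarrow> ereal) \<Rightarrow> real \<Rightarrow> real^'d \<Rightarrow> real^'n \<Rightarrow> real^'d" where
  "sdapd_xbar A g eta x y =
     prox (\<lambda>v. ereal eta * g v) (x - (eta / real CARD('n)) *\<^sub>R (transpose A *v y))"

definition sdapd_ynew ::
  "real^'d^'n::finite \<Rightarrow> ('n \<Rightarrow> real \<Rightarrow> real) \<Rightarrow> real \<Rightarrow> real^'n \<Rightarrow> real^'d \<Rightarrow> 'n \<Rightarrow> real^'n" where
  "sdapd_ynew A f tau y xb j =
     (\<chi> i. if i = j then prox (\<lambda>v. ereal tau * conj_fun (f i) v) (y $ i + tau * ((A $ i) \<bullet> xb))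
           else y $ i)"

fun sdapd ::
  "real^'d^'n::finite \<Rightarrow> (real^'d \<Rightarrow> ereal) \<Rightarrow> ('n \<Rightarrow> real \<Rightarrow> real) \<Rightarrow> real \<Rightarrow> real \<Rightarrow>
   (nat \<Rightarrow> real) \<Rightarrow> real^'d \<Rightarrow> real^'n \<Rightarrow> (nat \<Rightarrow> 'n) \<Rightarrow> nat \<Rightarrow>
   (real^'d) \<times> (real^'n) \<times> (real^'n)" where
  "sdapd A g f eta tau beta x0 y0 om 0 = (x0, y0, 0)"
| "sdapd A g f eta tau beta x0 y0 om (Suc t) =
     (let (x, y, s) = sdapd A g f eta tau beta x0 y0 om t;
          xb = sdapd_xbar A g eta x y;
          y' = sdapd_ynew A f tau y xb (om t);
          yb = y + real CARD('n) *\<^sub>R (y' - y);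
          s' = s + beta t *\<^sub>R yb
      in (prox (\<lambda>v. ereal (\<Sum>k\<le>t. beta k) * g v)
               (x0 - (1 / real CARD('n)) *\<^sub>R (transpose A *v s')), y', s'))"

text \<open>x^t, y^t, xbar^{t+1}, ybar^{t+1} along the index sequence om.\<close>
definition sd_x where "sd_x A g f eta tau beta x0 y0 om t = fst (sdapd A g f eta tau beta x0 y0 om t)"
definition sd_y where "sd_y A g f eta tau beta x0 y0 om t = fst (snd (sdapd A g f eta tau beta x0 y0 om t))"
definition sd_xbar where "sd_xbar A g f eta tau beta x0 y0 om t =
  sdapd_xbar A g eta (sd_x A g f eta tau beta x0 y0 om t) (sd_y A g f eta tau beta x0 y0 om t)"
definition sd_ybar where "sd_ybar A g f eta tau beta x0 y0 om t =
  sd_y A g f eta tau beta x0 y0 om t + real CARD('n) *\<^sub>R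
    (sd_y A g f eta tau beta x0 y0 om (Suc t) - (sd_y A g f eta tau beta x0 y0 om t :: real^'n::finite))"

end

theory Submission
  imports Defs
begin

text \<open>Averaging over the sampled index j turns the randomised dual update into the full
  proximal step P = prox of tau F at u = y^t + tau A xbar^{t+1}, where F(z) = sum_i f_i^*(z_i):
  the new iterate is y^t with its j-th coordinate replaced by P_j, so every separable
  quantity averages to ((n-1) times its value at y^t plus its value at P) / n.
  Since f_i is (1/gamma)-smooth, f_i^* is gamma-strongly convex, and the prox of tau f_i^*
  at f_i'(x) + tau x is f_i'(x). This yields the three-point inequality
  tau F(P) + |P - u|^2/2 + (1 + gamma tau)/2 |y - P|^2 <= tau F(y) + |y - u|^2/2,
  which after expanding u is exactly the averaged claim.\<close>

section \<open>Smooth convex functions and the prox of their conjugates\<close>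

lemma convex_on_deriv_tangent:
  fixes f :: "real \<Rightarrow> real"
  assumes "convex_on UNIV f" "f differentiable (at x)"
  shows "f x + deriv f x * (z - x) \<le> f z"
proof -
  have "(f has_field_derivative deriv f x) (at x within UNIV)"
    using assms(2) DERIV_deriv_iff_real_differentiable by auto
  then have "deriv f x * (z - x) \<le> f z - f x"
    by (intro convex_on_imp_above_tangent[OF assms(1) connected_UNIV]) auto
  then show ?thesis by simp
qed

lemma convex_on_deriv_mono:
  fixes f :: "real \<Rightarrow> real"
  assumes "convex_on UNIV f" "\<And>w. f differentiable (at w)" "a \<le> b"
  shows "deriv f a \<le> deriv f b"
proof -
  have "f a + deriv f a * (b - a) \<le> f b" "f b + deriv f b * (a - b) \<le> f a"
    using convex_on_deriv_tangent[OF assms(1) assms(2)] by auto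
  then have "0 \<le> (deriv f b - deriv f a) * (b - a)" by (simp add: algebra_simps)
  with assms(3) show ?thesis
    by (cases "a = b") (auto simp: zero_le_mult_iff)
qed

lemma smooth_with_descent:
  assumes "smooth_with L f"
  shows "f z \<le> f x + deriv f x * (z - x) + L / 2 * (z - x)\<^sup>2"
proof -
  have dif: "\<And>w. f differentiable (at w)"
    and lip: "\<And>a b. \<bar>deriv f a - deriv f b\<bar> \<le> L * \<bar>a - b\<bar>"
    using assms unfolding smooth_with_def by auto
  define d where "d = z - x"
  define h where "h s = f (x + s * d) - s * deriv f x * d - L / 2 * s\<^sup>2 * d\<^sup>2" for s
  have "h 1 \<le> h 0"
  proof (rule DERIV_nonpos_imp_nonincreasing[of 0 1 h])
    fix s :: real assume s: "0 \<le> s" "s \<le> 1"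
    have "(f has_real_derivative deriv f (x + s * d)) (at (x + s * d))"
      using dif DERIV_deriv_iff_real_differentiable by blast
    moreover have "((\<lambda>s. x + s * d) has_real_derivative d) (at s)"
      by (auto intro!: derivative_eq_intros)
    ultimately have "((\<lambda>s. f (x + s * d)) has_real_derivative deriv f (x + s * d) * d) (at s)"
      by (rule DERIV_chain2)
    then have "(h has_real_derivative
        (deriv f (x + s * d) - deriv f x) * d - L * s * d\<^sup>2) (at s)"
      unfolding h_def by (auto intro!: derivative_eq_intros simp: algebra_simps)
    moreover have "(deriv f (x + s * d) - deriv f x) * d \<le> L * s * d\<^sup>2"
    proof -
      have "(deriv f (x + s * d) - deriv f x) * d \<le> \<bar>deriv f (x + s * d) - deriv f x\<bar> * \<bar>d\<bar>"
        by (metis abs_ge_self abs_mult)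
      also have "\<dots> \<le> L * \<bar>s * d\<bar> * \<bar>d\<bar>"
        using lip[of "x + s * d" x] by (simp add: mult_right_mono)
      also have "\<dots> = L * s * d\<^sup>2"
        using s by (simp add: abs_mult power2_eq_square)
      finally show ?thesis .
    qed
    ultimately show "\<exists>y. (h has_real_derivative y) (at s) \<and> y \<le> 0"
      by (intro exI conjI) auto
  qed simp
  then show ?thesis unfolding h_def d_def by (simp add: algebra_simps)
qed

lemma smooth_with_isCont_deriv:
  assumes "smooth_with L f"
  shows "isCont (deriv f) x"
proof -
  have lip: "\<And>a b. \<bar>deriv f a - deriv f b\<bar> \<le> L * \<bar>a - b\<bar>"
    using assms unfolding smooth_with_def by auto
  then have "L-lipschitz_on UNIV (deriv f)"
    using lip[of 1 0] by (intro lipschitz_onI) (auto simp: dist_real_def)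
  then show ?thesis
    using lipschitz_on_continuous_on continuous_on_eq_continuous_at by blast
qed

lemma deriv_add_scaled_surj:
  fixes f :: "real \<Rightarrow> real"
  assumes cv: "convex_on UNIV f" and sm: "smooth_with L f" and tau: "tau > 0"
  shows "\<exists>x. deriv f x + tau * x = u"
proof -
  have dif: "\<And>w. f differentiable (at w)" using sm unfolding smooth_with_def by auto
  define h where "h x = deriv f x + tau * x" for x
  have cont: "\<And>x. isCont h x"
    unfolding h_def using smooth_with_isCont_deriv[OF sm] by (auto intro!: continuous_intros)
  define a where "a = (u - h 0) / tau"
  have ha: "tau * a = u - h 0" unfolding a_def using tau by simp
  show ?thesis
  proof (cases "h 0 \<le> u")
    case True
    then have "0 \<le> a" unfolding a_def using tau by simp
    moreover from convex_on_deriv_mono[OF cv dif this] have "u \<le> h a"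
      using ha unfolding h_def by simp
    ultimately show ?thesis
      using IVT[of h 0 u a] True cont unfolding h_def by blast
  next
    case False
    then have "a \<le> 0" unfolding a_def using tau by (simp add: divide_nonpos_pos)
    moreover from convex_on_deriv_mono[OF cv dif this] have "h a \<le> u"
      using ha unfolding h_def by simp
    ultimately show ?thesis
      using IVT[of h a u 0] False cont unfolding h_def by force
  qed
qed

lemma conj_fun_neq_MInf: "conj_fun f s \<noteq> -\<infinity>"
proof -
  have "ereal (s * 0 - f 0) \<le> conj_fun f s"
    unfolding conj_fun_def by (rule SUP_upper) auto
  then show ?thesis by auto
qed

lemma conj_fun_at_deriv:
  assumes "convex_on UNIV f" "f differentiable (at x)"
  shows "conj_fun f (deriv f x) = ereal (deriv f x * x - f x)"
  unfolding conj_fun_def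
proof (rule antisym)
  show "(SUP z. ereal (deriv f x * z - f z)) \<le> ereal (deriv f x * x - f x)"
    using convex_on_deriv_tangent[OF assms] by (intro SUP_least) (auto simp: algebra_simps)
qed (rule SUP_upper, simp)

lemma conj_fun_quadratic_minorant:
  assumes "smooth_with (1 / gamma) f" "gamma > 0"
  shows "ereal (deriv f x * x - f x + x * (w - deriv f x) + gamma / 2 * (w - deriv f x)\<^sup>2)
           \<le> conj_fun f w"
proof -
  define v where "v = deriv f x"
  \<comment> \<open>z maximises w z minus the descent-lemma upper bound of f around x\<close>
  define z where "z = x + gamma * (w - v)"
  have "f z \<le> f x + v * (z - x) + (1 / gamma) / 2 * (z - x)\<^sup>2"
    using smooth_with_descent[OF assms(1)] unfolding v_def by blast
  also have "(1 / gamma) / 2 * (z - x)\<^sup>2 = gamma / 2 * (w - v)\<^sup>2"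
    using assms(2) unfolding z_def by (simp add: power2_eq_square field_simps)
  finally have "v * x - f x + x * (w - v) + gamma / 2 * (w - v)\<^sup>2 \<le> w * z - f z"
    unfolding z_def by (simp add: algebra_simps power2_eq_square)
  also have "ereal (w * z - f z) \<le> conj_fun f w"
    unfolding conj_fun_def by (rule SUP_upper) auto
  finally show ?thesis unfolding v_def by simp
qed

lemma prox_eqI:
  fixes h :: "'a::real_normed_vector \<Rightarrow> ereal"
  assumes fin: "\<bar>h v\<bar> \<noteq> \<infinity>" and c: "c > 0"
    and three_point: "\<And>w. h v + ereal (1/2 * (norm (v - u))\<^sup>2 + c * (norm (w - v))\<^sup>2)
                            \<le> h w + ereal (1/2 * (norm (w - u))\<^sup>2)"
  shows "prox h u = v"
proof -
  define \<Phi> where "\<Phi> w = h w + ereal (1/2 * (norm (w - u))\<^sup>2)" for w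
  have "\<Phi> v \<le> \<Phi> w" for w
  proof -
    have "\<Phi> v \<le> h v + ereal (1/2 * (norm (v - u))\<^sup>2 + c * (norm (w - v))\<^sup>2)"
      unfolding \<Phi>_def using c by (intro add_left_mono) simp
    also have "\<dots> \<le> \<Phi> w" unfolding \<Phi>_def by (rule three_point)
    finally show ?thesis .
  qed
  then have "\<forall>w. \<Phi> (prox h u) \<le> \<Phi> w"
    unfolding prox_def \<Phi>_def by (rule someI[of _ v, OF allI])
  then have "h v + ereal (1/2 * (norm (v - u))\<^sup>2 + c * (norm (prox h u - v))\<^sup>2)
               \<le> h v + ereal (1/2 * (norm (v - u))\<^sup>2)"
    using three_point[of "prox h u"] unfolding \<Phi>_def by (meson order_trans)
  with fin have "c * (norm (prox h u - v))\<^sup>2 \<le> 0"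
    by (cases "h v") auto
  with c show ?thesis
    by (simp add: mult_le_0_iff)
qed

lemma conj_fun_three_point_at_deriv:
  fixes f :: "real \<Rightarrow> real" and x :: real
  assumes cv: "convex_on UNIV f" and sm: "smooth_with (1 / gamma) f"
    and gamma: "gamma > 0" and tau: "tau > 0"
  defines "v \<equiv> deriv f x" and "u \<equiv> deriv f x + tau * x"
  shows "ereal tau * conj_fun f v + ereal (1/2 * (v - u)\<^sup>2 + (1 + gamma * tau) / 2 * (w - v)\<^sup>2)
           \<le> ereal tau * conj_fun f w + ereal (1/2 * (w - u)\<^sup>2)"
proof -
  define C where "C = v * x - f x"
  have dif: "f differentiable (at x)" using sm unfolding smooth_with_def by auto
  have "ereal (C + x * (w - v) + gamma / 2 * (w - v)\<^sup>2) \<le> conj_fun f w"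
    using conj_fun_quadratic_minorant[OF sm gamma] unfolding C_def v_def by simp
  then have "ereal tau * ereal (C + x * (w - v) + gamma / 2 * (w - v)\<^sup>2) + ereal (1/2 * (w - u)\<^sup>2)
               \<le> ereal tau * conj_fun f w + ereal (1/2 * (w - u)\<^sup>2)"
    using tau by (intro add_right_mono ereal_mult_left_mono) auto
  moreover have "tau * (C + x * (w - v) + gamma / 2 * (w - v)\<^sup>2) + 1/2 * (w - u)\<^sup>2
      = tau * C + 1/2 * (v - u)\<^sup>2 + (1 + gamma * tau) / 2 * (w - v)\<^sup>2"
    unfolding u_def v_def by (simp add: power2_eq_square field_simps)
  moreover have "conj_fun f v = ereal C"
    unfolding C_def v_def by (rule conj_fun_at_deriv[OF cv dif])
  ultimately show ?thesis by (simp add: add.assoc)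
qed

lemma prox_conj_fun:
  fixes f :: "real \<Rightarrow> real" and u :: real
  assumes cv: "convex_on UNIV f" and sm: "smooth_with (1 / gamma) f"
    and gamma: "gamma > 0" and tau: "tau > 0"
  defines "p \<equiv> prox (\<lambda>v. ereal tau * conj_fun f v) u"
  shows "conj_fun f p \<noteq> \<infinity>"
    and "ereal tau * conj_fun f p + ereal (1/2 * (p - u)\<^sup>2 + (1 + gamma * tau) / 2 * (w - p)\<^sup>2)
           \<le> ereal tau * conj_fun f w + ereal (1/2 * (w - u)\<^sup>2)"
proof -
  obtain x where u: "u = deriv f x + tau * x"
    using deriv_add_scaled_surj[OF cv sm tau] by metis
  have dif: "f differentiable (at x)" using sm unfolding smooth_with_def by auto
  have fin: "conj_fun f (deriv f x) = ereal (deriv f x * x - f x)"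
    by (rule conj_fun_at_deriv[OF cv dif])
  have p: "p = deriv f x"
    unfolding p_def u
  proof (rule prox_eqI[where c = "(1 + gamma * tau) / 2"])
    show "\<bar>ereal tau * conj_fun f (deriv f x)\<bar> \<noteq> \<infinity>" using fin by simp
    show "(1 + gamma * tau) / 2 > 0" using gamma tau by (simp add: add_pos_pos)
    show "ereal tau * conj_fun f (deriv f x)
            + ereal (1/2 * (norm (deriv f x - (deriv f x + tau * x)))\<^sup>2
                     + (1 + gamma * tau) / 2 * (norm (w - deriv f x))\<^sup>2)
          \<le> ereal tau * conj_fun f w + ereal (1/2 * (norm (w - (deriv f x + tau * x)))\<^sup>2)" for w
      using conj_fun_three_point_at_deriv[OF cv sm gamma tau, of x w] by simp
  qed
  show "conj_fun f p \<noteq> \<infinity>" using p fin by simp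
  show "ereal tau * conj_fun f p + ereal (1/2 * (p - u)\<^sup>2 + (1 + gamma * tau) / 2 * (w - p)\<^sup>2)
          \<le> ereal tau * conj_fun f w + ereal (1/2 * (w - u)\<^sup>2)"
    unfolding p u by (rule conj_fun_three_point_at_deriv[OF cv sm gamma tau])
qed

section \<open>Averaging over a single-coordinate update\<close>

definition vec_upd :: "'a^'n \<Rightarrow> 'n \<Rightarrow> 'a \<Rightarrow> 'a^'n" where
  "vec_upd z j s = (\<chi> i. if i = j then s else z $ i)"

lemma vec_upd_nth [simp]: "vec_upd z j s $ i = (if i = j then s else z $ i)"
  by (simp add: vec_upd_def)

lemma sum_vec_upd_separable:
  fixes \<phi> :: "'n::finite \<Rightarrow> 'a \<Rightarrow> real"
  shows "(\<Sum>j\<in>UNIV. \<Sum>i\<in>UNIV. \<phi> i (vec_upd z j (p $ j) $ i))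
           = (real CARD('n) - 1) * (\<Sum>i\<in>UNIV. \<phi> i (z $ i)) + (\<Sum>i\<in>UNIV. \<phi> i (p $ i))"
proof -
  have "(\<Sum>i\<in>UNIV. \<phi> i (vec_upd z j (p $ j) $ i))
          = (\<Sum>i\<in>UNIV. \<phi> i (z $ i) + (if i = j then \<phi> j (p $ j) - \<phi> j (z $ j) else 0))" for j
    by (rule sum.cong) auto
  then have "(\<Sum>j\<in>UNIV. \<Sum>i\<in>UNIV. \<phi> i (vec_upd z j (p $ j) $ i))
               = (\<Sum>j\<in>UNIV. (\<Sum>i\<in>UNIV. \<phi> i (z $ i)) + (\<phi> j (p $ j) - \<phi> j (z $ j)))"
    by (simp add: sum.distrib)
  then show ?thesis
    by (simp add: sum.distrib sum_subtractf algebra_simps)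
qed

lemma power2_norm_vec: "(norm (z :: real^'n::finite))\<^sup>2 = (\<Sum>i\<in>UNIV. (z $ i)\<^sup>2)"
  by (subst power2_norm_eq_inner) (simp add: inner_vec_def power2_eq_square)

lemma sum_norm_sq_vec_upd:
  fixes z p y :: "real^'n::finite"
  shows "(\<Sum>j\<in>UNIV. (norm (vec_upd z j (p $ j) - y))\<^sup>2)
           = (real CARD('n) - 1) * (norm (z - y))\<^sup>2 + (norm (p - y))\<^sup>2"
  using sum_vec_upd_separable[of "\<lambda>i s. (s - y $ i)\<^sup>2" z p]
  by (simp add: power2_norm_vec)

lemma sum_inner_vec_upd:
  fixes z p c :: "real^'n::finite"
  shows "(\<Sum>j\<in>UNIV. (vec_upd z j (p $ j) - z) \<bullet> c) = (p - z) \<bullet> c"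
  using sum_vec_upd_separable[of "\<lambda>i s. (s - z $ i) * c $ i" z p]
  by (simp add: inner_vec_def)

definition dual_prox :: "('n::finite \<Rightarrow> real \<Rightarrow> real) \<Rightarrow> real \<Rightarrow> real^'n \<Rightarrow> real^'n" where
  "dual_prox f tau u = (\<chi> i. prox (\<lambda>v. ereal tau * conj_fun (f i) v) (u $ i))"

text \<open>Only meaningful where every f_i^*(z_i) is finite: real_of_ereal sends infinity to 0.\<close>

definition conj_sum :: "('n::finite \<Rightarrow> real \<Rightarrow> real) \<Rightarrow> real^'n \<Rightarrow> real" where
  "conj_sum f z = (\<Sum>i\<in>UNIV. real_of_ereal (conj_fun (f i) (z $ i)))"

lemma conj_fun_real: "conj_fun f s \<noteq> \<infinity> \<Longrightarrow> conj_fun f s = ereal (real_of_ereal (conj_fun f s))"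
  using conj_fun_neq_MInf[of f s] by (cases "conj_fun f s") auto

lemma fstar_eq_conj_sum:
  fixes f :: "'n::finite \<Rightarrow> real \<Rightarrow> real"
  assumes "\<And>i. conj_fun (f i) (z $ i) \<noteq> \<infinity>"
  shows "fstar f z = ereal (conj_sum f z / real CARD('n))"
proof -
  have "(\<Sum>i\<in>UNIV. conj_fun (f i) (z $ i)) = (\<Sum>i\<in>UNIV. ereal (real_of_ereal (conj_fun (f i) (z $ i))))"
    using conj_fun_real[OF assms] by simp
  then show ?thesis unfolding fstar_def conj_sum_def by simp
qed

lemma fstar_eq_PInf:
  assumes "conj_fun (f i) (z $ i) = \<infinity>"
  shows "fstar f z = \<infinity>"
  using assms unfolding fstar_def by (auto simp: sum_Pinfty)

lemma dual_prox_three_point: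
  fixes f :: "'n::finite \<Rightarrow> real \<Rightarrow> real" and u w :: "real^'n"
  assumes gamma: "gamma > 0" and tau: "tau > 0"
    and cv: "\<And>i. convex_on UNIV (f i)" and sm: "\<And>i. smooth_with (1 / gamma) (f i)"
    and w_dom: "\<And>i. conj_fun (f i) (w $ i) \<noteq> \<infinity>"
  defines "P \<equiv> dual_prox f tau u"
  shows "(\<And>i. conj_fun (f i) (P $ i) \<noteq> \<infinity>)"
    and "tau * conj_sum f P + 1/2 * (norm (P - u))\<^sup>2 + (1 + gamma * tau) / 2 * (norm (w - P))\<^sup>2
           \<le> tau * conj_sum f w + 1/2 * (norm (w - u))\<^sup>2"
proof -
  have P: "P $ i = prox (\<lambda>v. ereal tau * conj_fun (f i) v) (u $ i)" for i
    unfolding P_def dual_prox_def by simp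
  show P_dom: "conj_fun (f i) (P $ i) \<noteq> \<infinity>" for i
    unfolding P by (rule prox_conj_fun(1)[OF cv sm gamma tau])
  have "tau * real_of_ereal (conj_fun (f i) (P $ i))
          + (1/2 * (P $ i - u $ i)\<^sup>2 + (1 + gamma * tau) / 2 * (w $ i - P $ i)\<^sup>2)
        \<le> tau * real_of_ereal (conj_fun (f i) (w $ i)) + 1/2 * (w $ i - u $ i)\<^sup>2" for i
  proof -
    have "ereal tau * conj_fun (f i) (P $ i)
            + ereal (1/2 * (P $ i - u $ i)\<^sup>2 + (1 + gamma * tau) / 2 * (w $ i - P $ i)\<^sup>2)
          \<le> ereal tau * conj_fun (f i) (w $ i) + ereal (1/2 * (w $ i - u $ i)\<^sup>2)"
      unfolding P by (rule prox_conj_fun(2)[OF cv sm gamma tau])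
    then show ?thesis
      by (metis conj_fun_real[OF P_dom] conj_fun_real[OF w_dom] plus_ereal.simps(1)
          times_ereal.simps(1) ereal_less_eq(3))
  qed
  then have "(\<Sum>i\<in>UNIV. tau * real_of_ereal (conj_fun (f i) (P $ i))
          + (1/2 * (P $ i - u $ i)\<^sup>2 + (1 + gamma * tau) / 2 * (w $ i - P $ i)\<^sup>2))
        \<le> (\<Sum>i\<in>UNIV. tau * real_of_ereal (conj_fun (f i) (w $ i)) + 1/2 * (w $ i - u $ i)\<^sup>2)"
    by (rule sum_mono)
  then show "tau * conj_sum f P + 1/2 * (norm (P - u))\<^sup>2 + (1 + gamma * tau) / 2 * (norm (w - P))\<^sup>2
               \<le> tau * conj_sum f w + 1/2 * (norm (w - u))\<^sup>2"
    by (simp add: conj_sum_def power2_norm_vec sum.distrib sum_distrib_left add.assoc)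
qed

lemma power2_norm_diff_shift:
  fixes a z c :: "'a::real_inner"
  shows "(norm (a - (z + t *\<^sub>R c)))\<^sup>2 = (norm (a - z))\<^sup>2 - 2 * t * ((a - z) \<bullet> c) + t\<^sup>2 * (norm c)\<^sup>2"
  unfolding power2_norm_eq_inner
  by (simp add: inner_diff_left inner_diff_right inner_add_left
      inner_add_right inner_commute power2_eq_square algebra_simps)

lemma sum_vec_upd_sq_dists:
  fixes z y p :: "real^'n::finite"
  defines "N \<equiv> real CARD('n)"
  shows "(\<Sum>j\<in>UNIV. (1 + (N - 1) * gamma * tau / N) * (norm (z - y))\<^sup>2
            - (1 + gamma * tau) * (norm (vec_upd z j (p $ j) - y))\<^sup>2
            - (norm (vec_upd z j (p $ j) - z))\<^sup>2)
         = (norm (z - y))\<^sup>2 - (1 + gamma * tau) * (norm (p - y))\<^sup>2 - (norm (p - z))\<^sup>2"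
proof -
  have N: "N > 0" unfolding N_def by simp
  have "(\<Sum>j\<in>UNIV. (1 + (N - 1) * gamma * tau / N) * (norm (z - y))\<^sup>2
          - (1 + gamma * tau) * (norm (vec_upd z j (p $ j) - y))\<^sup>2
          - (norm (vec_upd z j (p $ j) - z))\<^sup>2)
        = N * ((1 + (N - 1) * gamma * tau / N) * (norm (z - y))\<^sup>2)
          - (1 + gamma * tau) * (\<Sum>j\<in>UNIV. (norm (vec_upd z j (p $ j) - y))\<^sup>2)
          - (\<Sum>j\<in>UNIV. (norm (vec_upd z j (p $ j) - z))\<^sup>2)"
    by (simp add: sum_subtractf sum_distrib_left N_def)
  also have "\<dots> = (norm (z - y))\<^sup>2 - (1 + gamma * tau) * (norm (p - y))\<^sup>2 - (norm (p - z))\<^sup>2"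
    unfolding sum_norm_sq_vec_upd N_def[symmetric] using N by (simp add: field_simps)
  finally show ?thesis .
qed

lemma sum_dual_step_gap:
  fixes f :: "'n::finite \<Rightarrow> real \<Rightarrow> real" and z p y c :: "real^'n"
  assumes z_dom: "\<And>i. conj_fun (f i) (z $ i) \<noteq> \<infinity>"
    and p_dom: "\<And>i. conj_fun (f i) (p $ i) \<noteq> \<infinity>"
    and y_dom: "\<And>i. conj_fun (f i) (y $ i) \<noteq> \<infinity>"
  defines "N \<equiv> real CARD('n)"
  shows "(\<Sum>j\<in>UNIV.
            ereal (- (1 / N) * ((z + N *\<^sub>R (vec_upd z j (p $ j) - z) - y) \<bullet> c))
          + ereal N * fstar f (vec_upd z j (p $ j))
          - ereal (N - 1) * fstar f z
          - fstar f y)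
         = ereal (conj_sum f p - conj_sum f y - (p - y) \<bullet> c)"
proof -
  have N: "N > 0" unfolding N_def by simp
  have upd_dom: "conj_fun (f i) (vec_upd z j (p $ j) $ i) \<noteq> \<infinity>" for i j
    using p_dom z_dom by simp
  have sum_conj: "(\<Sum>j\<in>UNIV. conj_sum f (vec_upd z j (p $ j))) = (N - 1) * conj_sum f z + conj_sum f p"
    unfolding conj_sum_def N_def by (rule sum_vec_upd_separable)
  have "(\<Sum>j\<in>UNIV. (z + N *\<^sub>R (vec_upd z j (p $ j) - z) - y) \<bullet> c)
          = (\<Sum>j\<in>UNIV. (z - y) \<bullet> c + N * ((vec_upd z j (p $ j) - z) \<bullet> c))"
    by (simp add: inner_add_left inner_diff_left algebra_simps)
  also have "\<dots> = N * ((z - y) \<bullet> c) + N * ((p - z) \<bullet> c)"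
    by (simp add: sum.distrib sum_distrib_left[symmetric] sum_inner_vec_upd N_def)
  also have "\<dots> = N * ((p - y) \<bullet> c)"
    by (simp add: inner_diff_left algebra_simps)
  finally have sum_inner: "(\<Sum>j\<in>UNIV. (z + N *\<^sub>R (vec_upd z j (p $ j) - z) - y) \<bullet> c)
                             = N * ((p - y) \<bullet> c)" .
  have "(\<Sum>j\<in>UNIV.
            ereal (- (1 / N) * ((z + N *\<^sub>R (vec_upd z j (p $ j) - z) - y) \<bullet> c))
          + ereal N * fstar f (vec_upd z j (p $ j))
          - ereal (N - 1) * fstar f z
          - fstar f y)
        = ereal (\<Sum>j\<in>UNIV. - (1 / N) * ((z + N *\<^sub>R (vec_upd z j (p $ j) - z) - y) \<bullet> c)
            + conj_sum f (vec_upd z j (p $ j)) - (N - 1) / N * conj_sum f z - conj_sum f y / N)"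
    using N by (simp add: fstar_eq_conj_sum[OF z_dom] fstar_eq_conj_sum[OF upd_dom]
        fstar_eq_conj_sum[OF y_dom] N_def[symmetric])
  also have "\<dots> = ereal (- (1 / N) * (\<Sum>j\<in>UNIV. (z + N *\<^sub>R (vec_upd z j (p $ j) - z) - y) \<bullet> c)
            + (\<Sum>j\<in>UNIV. conj_sum f (vec_upd z j (p $ j))) - (N - 1) * conj_sum f z - conj_sum f y)"
    using N by (simp add: sum.distrib sum_subtractf sum_negf sum_distrib_left N_def)
  also have "\<dots> = ereal (conj_sum f p - conj_sum f y - (p - y) \<bullet> c)"
    unfolding sum_inner sum_conj using N by simp
  finally show ?thesis .
qed

lemma averaged_dual_step:
  fixes f :: "'n::finite \<Rightarrow> real \<Rightarrow> real" and z y c :: "real^'n"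
  assumes gamma: "gamma > 0" and tau: "tau > 0"
    and cv: "\<And>i. convex_on UNIV (f i)" and sm: "\<And>i. smooth_with (1 / gamma) (f i)"
    and z_dom: "\<And>i. conj_fun (f i) (z $ i) \<noteq> \<infinity>"
  defines "P \<equiv> dual_prox f tau (z + tau *\<^sub>R c)" and "N \<equiv> real CARD('n)"
  shows "ereal (1 / (2 * tau) * ((1 / N) * (\<Sum>j\<in>UNIV.
            (1 + (N - 1) * gamma * tau / N) * (norm (z - y))\<^sup>2
          - (1 + gamma * tau) * (norm (vec_upd z j (P $ j) - y))\<^sup>2
          - (norm (vec_upd z j (P $ j) - z))\<^sup>2)))
    \<ge> ereal (1 / N) * (\<Sum>j\<in>UNIV.
          ereal (- (1 / N) * ((z + N *\<^sub>R (vec_upd z j (P $ j) - z) - y) \<bullet> c))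
        + ereal N * fstar f (vec_upd z j (P $ j))
        - ereal (N - 1) * fstar f z
        - fstar f y)"
    (is "_ \<ge> ereal (1 / N) * ?rhs")
proof -
  have N: "N > 0" unfolding N_def by simp
  have P_dom: "\<And>i. conj_fun (f i) (P $ i) \<noteq> \<infinity>"
    unfolding P_def by (rule dual_prox_three_point(1)[OF gamma tau cv sm z_dom])
  show ?thesis
  proof (cases "\<forall>i. conj_fun (f i) (y $ i) \<noteq> \<infinity>")
    case True
    have "tau * conj_sum f P + 1/2 * (norm (P - (z + tau *\<^sub>R c)))\<^sup>2
            + (1 + gamma * tau) / 2 * (norm (y - P))\<^sup>2
          \<le> tau * conj_sum f y + 1/2 * (norm (y - (z + tau *\<^sub>R c)))\<^sup>2"
      unfolding P_def using True by (intro dual_prox_three_point(2)[OF gamma tau cv sm]) auto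
    then have "2 * tau * (conj_sum f P - conj_sum f y - (P - y) \<bullet> c)
                 \<le> (norm (z - y))\<^sup>2 - (1 + gamma * tau) * (norm (P - y))\<^sup>2 - (norm (P - z))\<^sup>2"
      unfolding power2_norm_diff_shift
      by (simp add: norm_minus_commute inner_diff_left field_simps)
    from divide_right_mono[OF this, of "2 * tau * N"] show ?thesis
      using N tau
      unfolding sum_vec_upd_sq_dists N_def sum_dual_step_gap[OF z_dom P_dom True[rule_format]] by simp
  next
    case False
    then have "fstar f y = \<infinity>" using fstar_eq_PInf by blast
    then have "?rhs = (\<Sum>j\<in>(UNIV :: 'n set). -\<infinity>)"
      using P_dom z_dom by (simp add: fstar_eq_conj_sum)
    moreover have "\<bar>\<Sum>j\<in>(UNIV :: 'n set). -\<infinity>::ereal\<bar> = \<infinity>"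
      and "(\<Sum>j\<in>(UNIV :: 'n set). -\<infinity>::ereal) \<noteq> \<infinity>"
      by (auto simp: sum_Inf sum_Pinfty)
    ultimately show ?thesis using N by (cases ?rhs) auto
  qed
qed

section \<open>The SDAPD iterates\<close>

lemma sdapd_cong:
  assumes "\<And>k. k < t \<Longrightarrow> om' k = om k"
  shows "sdapd A g f eta tau beta x0 y0 om' t = sdapd A g f eta tau beta x0 y0 om t"
  using assms by (induction t) (auto simp: Let_def split: prod.splits)

lemma sd_y_fun_upd: "sd_y A g f eta tau beta x0 y0 (om(t := j)) t = sd_y A g f eta tau beta x0 y0 om t"
  unfolding sd_y_def by (simp add: sdapd_cong[of t "om(t := j)" om])

lemma sd_xbar_fun_upd:
  "sd_xbar A g f eta tau beta x0 y0 (om(t := j)) t = sd_xbar A g f eta tau beta x0 y0 om t"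
  unfolding sd_xbar_def sd_x_def sd_y_def by (simp add: sdapd_cong[of t "om(t := j)" om])

lemma sdapd_ynew_eq_vec_upd:
  "sdapd_ynew A f tau y xb j = vec_upd y j (dual_prox f tau (y + tau *\<^sub>R (A *v xb)) $ j)"
  by (simp add: vec_eq_iff sdapd_ynew_def dual_prox_def matrix_vector_mult_def inner_vec_def
      mult.commute)

lemma sd_y_Suc:
  "sd_y A g f eta tau beta x0 y0 om (Suc t) =
     sdapd_ynew A f tau (sd_y A g f eta tau beta x0 y0 om t) (sd_xbar A g f eta tau beta x0 y0 om t) (om t)"
  unfolding sd_y_def sd_xbar_def sd_x_def by (simp add: Let_def split: prod.splits)

lemma sd_y_conj_fun_finite:
  assumes gamma: "gamma > 0" and tau: "tau > 0"
    and cv: "\<And>i. convex_on UNIV (f i)" and sm: "\<And>i. smooth_with (1 / gamma) (f i)"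
    and y0_dom: "\<And>i. conj_fun (f i) (y0 $ i) \<noteq> \<infinity>"
  shows "conj_fun (f i) (sd_y A g f eta tau beta x0 y0 om t $ i) \<noteq> \<infinity>"
proof (induction t arbitrary: i)
  case 0
  then show ?case using y0_dom by (simp add: sd_y_def)
next
  case (Suc t)
  then show ?case
    using dual_prox_three_point(1)[OF gamma tau cv sm Suc.IH]
    by (simp add: sd_y_Suc sdapd_ynew_eq_vec_upd)
qed

theorem lemma3p4:
  fixes A :: "real^'d^'n::finite"
    and f :: "'n \<Rightarrow> real \<Rightarrow> real"
    and g :: "real^'d \<Rightarrow> ereal"
    and gamma mu eta tau :: real
    and beta :: "nat \<Rightarrow> real"
    and x0 :: "real^'d" and y0 :: "real^'n"
    and om :: "nat \<Rightarrow> 'n"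
    and t :: nat and y :: "real^'n"
  assumes gamma_pos: "gamma > 0"
    and f_convex: "\<And>i. convex_on UNIV (f i)"
    and f_smooth: "\<And>i. smooth_with (1 / gamma) (f i)"
    and mu_pos: "mu > 0"
    and g_closed: "closed_fun g"
    and g_sconvex: "strongly_convex mu g"
    and g_proper: "\<exists>x. g x \<noteq> \<infinity>" "\<And>x. g x \<noteq> -\<infinity>"
    and eta_pos: "eta > 0" and tau_pos: "tau > 0"
    and beta_pos: "\<And>k. beta k > 0"
    and y0_dom: "\<And>i. conj_fun (f i) (y0 $ i) \<noteq> \<infinity>"
  shows
   "ereal (1 / (2 * tau) * ((1 / real CARD('n)) * (\<Sum>j\<in>UNIV.
        (1 + (real CARD('n) - 1) * gamma * tau / real CARD('n))
           * (norm (sd_y A g f eta tau beta x0 y0 (om(t := j)) t - y))\<^sup>2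
      - (1 + gamma * tau) * (norm (sd_y A g f eta tau beta x0 y0 (om(t := j)) (Suc t) - y))\<^sup>2
      - (norm (sd_y A g f eta tau beta x0 y0 (om(t := j)) (Suc t)
               - sd_y A g f eta tau beta x0 y0 (om(t := j)) t))\<^sup>2)))
    \<ge> ereal (1 / real CARD('n)) * (\<Sum>j\<in>UNIV.
        ereal (- (1 / real CARD('n)) * ((sd_ybar A g f eta tau beta x0 y0 (om(t := j)) t - y)
                 \<bullet> (A *v sd_xbar A g f eta tau beta x0 y0 (om(t := j)) t)))
      + ereal (real CARD('n)) * fstar f (sd_y A g f eta tau beta x0 y0 (om(t := j)) (Suc t))
      - ereal (real CARD('n) - 1) * fstar f (sd_y A g f eta tau beta x0 y0 (om(t := j)) t)
      - fstar f y)"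
proof -
  \<comment> \<open>The dual step only involves y^t and xbar^{t+1}.\<close>
  define yt where "yt = sd_y A g f eta tau beta x0 y0 om t"
  define xb where "xb = sd_xbar A g f eta tau beta x0 y0 om t"
  have y_t: "sd_y A g f eta tau beta x0 y0 (om(t := j)) t = yt" for j
    unfolding yt_def by (rule sd_y_fun_upd)
  have xbar_t: "sd_xbar A g f eta tau beta x0 y0 (om(t := j)) t = xb" for j
    unfolding xb_def by (rule sd_xbar_fun_upd)
  have y_Suc: "sd_y A g f eta tau beta x0 y0 (om(t := j)) (Suc t)
                 = vec_upd yt j (dual_prox f tau (yt + tau *\<^sub>R (A *v xb)) $ j)" for j
    by (simp add: sd_y_Suc y_t xbar_t sdapd_ynew_eq_vec_upd)
  have yt_dom: "\<And>i. conj_fun (f i) (yt $ i) \<noteq> \<infinity>"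
    unfolding yt_def by (rule sd_y_conj_fun_finite[OF gamma_pos tau_pos f_convex f_smooth y0_dom])
  show ?thesis
    unfolding sd_ybar_def y_t y_Suc xbar_t
    by (rule averaged_dual_step[OF gamma_pos tau_pos f_convex f_smooth yt_dom])
qed

end
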